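(* Let $\mathcal H$ be a finite-dimensional Hilbert space, $|\theta\rangle\in\mathcal H$ a pure state, and $n,m,r$ nonnegative integers with $r+m\le n$. If $\varrho_n\in\mathrm{conv}(|\theta\rangle^{[\otimes,n,r]})$, then $\varrho_{n-m}=\mathrm{Tr}_m(\varrho_n)$, the reduced density matrix obtained by tracing out any $m$ of the $n$ systems, belongs to $\mathrm{conv}(|\theta\rangle^{[\otimes,n-m,r]})$.
   Context: For $0\le r\le N$, let $\mathrm{Sym}(\mathcal H^{\otimes N})$ be the symmetric subspace of $\mathcal H^{\otimes N}$, and let $\mathcal V(\mathcal H^{\otimes N},|\theta\rangle^{\otimes N-r})=\{\pi(|\theta\rangle^{\otimes N-r}\otimes|\psi_r\rangle):\pi\in S_N,\ |\psi_r\rangle\in\mathcal H^{\otimes r}\}$, where $S_N$ acts by permuting the $N$ tensor factors. The almost power states along $|\theta\rangle$ are the pure states in $|\theta\rangle^{[\otimes,N,r]}:=\mathrm{Sym}(\mathcal H^{\otimes N})\cap\mathrm{span}(\mathcal V(\mathcal H^{\otimes N},|\theta\rangle^{\otimes N-r}))$, and $\mathrm{conv}(|\theta\rangle^{[\otimes,N,r]})$ denotes the set of mixtures (convex combinations of the projectors) of such states. *)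

theory Defs
  imports Complex_Main "HOL-Combinatorics.Permutations"
begin

text \<open>The finite-dimensional Hilbert space H is C^d with orthonormal
basis indexed by 0..<d. A vector of H^{(tensor N)} is a function on lists of length N
with entries < d (basis tuples), vanishing elsewhere. Operators on H^{(tensor N)}
are kernels (matrices) indexed by pairs of such lists.\<close>

definition tuples :: "nat \<Rightarrow> nat \<Rightarrow> nat list set" where
  "tuples d N = {xs. length xs = N \<and> set xs \<subseteq> {..<d}}"

definition tvec :: "nat \<Rightarrow> nat \<Rightarrow> (nat list \<Rightarrow> complex) \<Rightarrow> bool" where
  "tvec d N \<phi> \<longleftrightarrow> (\<forall>xs. xs \<notin> tuples d N \<longrightarrow> \<phi> xs = 0)"

definition hvec :: "nat \<Rightarrow> (nat \<Rightarrow> complex) \<Rightarrow> bool" where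
  "hvec d \<theta> \<longleftrightarrow> (\<forall>i. i \<ge> d \<longrightarrow> \<theta> i = 0)"

definition hnorm2 :: "nat \<Rightarrow> (nat \<Rightarrow> complex) \<Rightarrow> real" where
  "hnorm2 d \<theta> = (\<Sum>i<d. (cmod (\<theta> i))\<^sup>2)"

definition tnorm2 :: "nat \<Rightarrow> nat \<Rightarrow> (nat list \<Rightarrow> complex) \<Rightarrow> real" where
  "tnorm2 d N \<phi> = (\<Sum>xs\<in>tuples d N. (cmod (\<phi> xs))\<^sup>2)"

definition tpow :: "(nat \<Rightarrow> complex) \<Rightarrow> nat \<Rightarrow> nat list \<Rightarrow> complex" where
  "tpow \<theta> k xs = (if length xs = k then (\<Prod>x\<leftarrow>xs. \<theta> x) else 0)"

definition tprod :: "nat \<Rightarrow> (nat list \<Rightarrow> complex) \<Rightarrow> (nat list \<Rightarrow> complex) \<Rightarrow> nat list \<Rightarrow> complex" where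
  "tprod k \<phi> \<chi> xs = \<phi> (take k xs) * \<chi> (drop k xs)"

definition tperm :: "(nat \<Rightarrow> nat) \<Rightarrow> (nat list \<Rightarrow> complex) \<Rightarrow> nat list \<Rightarrow> complex" where
  "tperm \<pi> \<phi> xs = \<phi> (permute_list \<pi> xs)"

definition sym_space :: "nat \<Rightarrow> nat \<Rightarrow> (nat list \<Rightarrow> complex) set" where
  "sym_space d N = {\<phi>. tvec d N \<phi> \<and> (\<forall>\<pi>. \<pi> permutes {..<N} \<longrightarrow> tperm \<pi> \<phi> = \<phi>)}"

definition cspan :: "(nat list \<Rightarrow> complex) set \<Rightarrow> (nat list \<Rightarrow> complex) set" where
  "cspan S = {\<phi>. \<exists>F c. finite F \<and> F \<subseteq> S \<and> \<phi> = (\<lambda>xs. \<Sum>v\<in>F. c v * v xs)}"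

definition Vset :: "nat \<Rightarrow> nat \<Rightarrow> nat \<Rightarrow> (nat \<Rightarrow> complex) \<Rightarrow> (nat list \<Rightarrow> complex) set" where
  "Vset d N r \<theta> = {tperm \<pi> (tprod (N - r) (tpow \<theta> (N - r)) \<psi>) | \<pi> \<psi>.
      \<pi> permutes {..<N} \<and> tvec d r \<psi>}"

definition almost_power :: "nat \<Rightarrow> nat \<Rightarrow> nat \<Rightarrow> (nat \<Rightarrow> complex) \<Rightarrow> (nat list \<Rightarrow> complex) set" where
  "almost_power d N r \<theta> = sym_space d N \<inter> cspan (Vset d N r \<theta>)"

definition almost_power_states :: "nat \<Rightarrow> nat \<Rightarrow> nat \<Rightarrow> (nat \<Rightarrow> complex) \<Rightarrow> (nat list \<Rightarrow> complex) set" where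
  "almost_power_states d N r \<theta> = {\<phi> \<in> almost_power d N r \<theta>. tnorm2 d N \<phi> = 1}"

definition proj :: "(nat list \<Rightarrow> complex) \<Rightarrow> nat list \<Rightarrow> nat list \<Rightarrow> complex" where
  "proj \<phi> xs ys = \<phi> xs * cnj (\<phi> ys)"

definition conv_almost_power :: "nat \<Rightarrow> nat \<Rightarrow> nat \<Rightarrow> (nat \<Rightarrow> complex) \<Rightarrow> (nat list \<Rightarrow> nat list \<Rightarrow> complex) set" where
  "conv_almost_power d N r \<theta> = {\<rho>. \<exists>F p. finite F \<and> F \<subseteq> almost_power_states d N r \<theta> \<and>
      (\<forall>\<phi>\<in>F. p \<phi> \<ge> (0::real)) \<and> sum p F = 1 \<and>
      \<rho> = (\<lambda>xs ys. \<Sum>\<phi>\<in>F. complex_of_real (p \<phi>) * proj \<phi> xs ys)}"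

text \<open>Reassemble a full n-tuple from the kept entries xs (positions not in T, in
increasing order) and the traced entries zs (positions in T, in increasing order).\<close>
definition merge :: "nat \<Rightarrow> nat set \<Rightarrow> nat list \<Rightarrow> nat list \<Rightarrow> nat list" where
  "merge n T xs zs = map (\<lambda>i. if i \<in> T then zs ! card {j\<in>T. j < i}
                              else xs ! card {j\<in>{..<n} - T. j < i}) [0..<n]"

definition ptrace :: "nat \<Rightarrow> nat \<Rightarrow> nat set \<Rightarrow> (nat list \<Rightarrow> nat list \<Rightarrow> complex) \<Rightarrow> nat list \<Rightarrow> nat list \<Rightarrow> complex" where
  "ptrace d n T \<rho> xs ys =
     (if xs \<in> tuples d (n - card T) \<and> ys \<in> tuples d (n - card T)
      then (\<Sum>zs\<in>tuples d (card T). \<rho> (merge n T xs zs) (merge n T ys zs))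
      else 0)"

end

theory Submission
  imports Defs
begin

text \<open>Almost power states are symmetric, so tracing out the systems in \<open>T\<close> is the same as
tracing out the last \<open>m\<close> of them. For \<open>\<rho> = \<Sum> p\<^sub>\<phi> |\<phi>\<rangle>\<langle>\<phi>|\<close> this gives
\<open>\<Sum> p\<^sub>\<phi> |\<phi>\<^sub>z\<rangle>\<langle>\<phi>\<^sub>z|\<close>, summed over \<open>\<phi>\<close> and basis tuples \<open>z\<close>, where \<open>\<phi>\<^sub>z(x) = \<phi>(x z)\<close>.
Each \<open>\<phi>\<^sub>z\<close> is again symmetric, and it lies in the span of \<open>V\<close> for \<open>n - m\<close> systems: the span of
\<open>V(H\<^sup>N, \<theta>\<^sup>N\<^sup>-\<^sup>r)\<close> is spanned by the products \<open>f\<^sub>1 \<otimes> \<dots> \<otimes> f\<^sub>N\<close> whose factors are \<open>\<theta>\<close> or basis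
vectors, at least \<open>N - r\<close> of them \<open>\<theta>\<close>, and fixing the last \<open>m\<close> arguments of such a product
leaves a multiple of a product of the same kind on \<open>N - m\<close> systems. Since the squared norms
of the \<open>\<phi>\<^sub>z\<close> add up to \<open>\<parallel>\<phi>\<parallel>\<^sup>2 = 1\<close>, normalising the nonzero \<open>\<phi>\<^sub>z\<close> and moving their squared
norms into the weights gives a convex combination of almost power states.\<close>

lemma cspan_zero: "(\<lambda>xs. 0) \<in> cspan S"
  unfolding cspan_def by (rule CollectI, rule exI[of _ "{}"]) auto

lemma cspan_superset: "v \<in> S \<Longrightarrow> v \<in> cspan S"
  unfolding cspan_def by (rule CollectI, rule exI[of _ "{v}"], rule exI[of _ "\<lambda>_. 1"]) auto

lemma cspan_scale:
  assumes "\<phi> \<in> cspan S"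
  shows "(\<lambda>xs. a * \<phi> xs) \<in> cspan S"
proof -
  from assms obtain F c where F: "finite F" "F \<subseteq> S" "\<phi> = (\<lambda>xs. \<Sum>v\<in>F. c v * v xs)"
    unfolding cspan_def by auto
  show ?thesis unfolding cspan_def
    by (rule CollectI, rule exI[of _ F], rule exI[of _ "\<lambda>v. a * c v"])
       (simp add: F sum_distrib_left mult.assoc)
qed

lemma cspan_add:
  assumes "\<phi> \<in> cspan S" "\<psi> \<in> cspan S"
  shows "(\<lambda>xs. \<phi> xs + \<psi> xs) \<in> cspan S"
proof -
  from assms(1) obtain F1 c1 where F1: "finite F1" "F1 \<subseteq> S" "\<phi> = (\<lambda>xs. \<Sum>v\<in>F1. c1 v * v xs)"
    unfolding cspan_def by auto
  from assms(2) obtain F2 c2 where F2: "finite F2" "F2 \<subseteq> S" "\<psi> = (\<lambda>xs. \<Sum>v\<in>F2. c2 v * v xs)"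
    unfolding cspan_def by auto
  define c where "c v = (if v \<in> F1 then c1 v else 0) + (if v \<in> F2 then c2 v else 0)" for v
  have "(\<lambda>xs. \<phi> xs + \<psi> xs) = (\<lambda>xs. \<Sum>v\<in>F1 \<union> F2. c v * v xs)"
  proof
    fix xs
    have "(\<Sum>v\<in>F1 \<union> F2. (if v \<in> F1 then c1 v else 0) * v xs) = (\<Sum>v\<in>F1. c1 v * v xs)"
      by (rule sum.mono_neutral_cong_right) (use F1 F2 in auto)
    moreover have "(\<Sum>v\<in>F1 \<union> F2. (if v \<in> F2 then c2 v else 0) * v xs) = (\<Sum>v\<in>F2. c2 v * v xs)"
      by (rule sum.mono_neutral_cong_right) (use F1 F2 in auto)
    ultimately show "\<phi> xs + \<psi> xs = (\<Sum>v\<in>F1 \<union> F2. c v * v xs)"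
      unfolding c_def distrib_right sum.distrib F1(3) F2(3) by simp
  qed
  then show ?thesis unfolding cspan_def using F1 F2 by blast
qed

lemma cspan_sum:
  assumes "finite I" "\<And>i. i \<in> I \<Longrightarrow> f i \<in> cspan S"
  shows "(\<lambda>xs. \<Sum>i\<in>I. a i * f i xs) \<in> cspan S"
  using assms
proof (induction I rule: finite_induct)
  case empty
  then show ?case using cspan_zero by simp
next
  case (insert x F)
  then show ?case
    using cspan_add[OF cspan_scale[of "f x" S "a x"], of "\<lambda>xs. \<Sum>i\<in>F. a i * f i xs"] by simp
qed

lemma cspan_reindex:
  assumes "\<And>u. u \<in> S \<Longrightarrow> (\<lambda>xs. u (g xs)) \<in> cspan S'" and "v \<in> cspan S"
  shows "(\<lambda>xs. v (g xs)) \<in> cspan S'"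
proof -
  from assms(2) obtain F c where F: "finite F" "F \<subseteq> S" "v = (\<lambda>xs. \<Sum>v\<in>F. c v * v xs)"
    unfolding cspan_def by auto
  have "(\<lambda>xs. \<Sum>u\<in>F. c u * (\<lambda>xs. u (g xs)) xs) \<in> cspan S'"
    by (rule cspan_sum) (use F assms(1) in auto)
  then show ?thesis unfolding F(3) by simp
qed

lemma finite_tuples: "finite (tuples d N)"
proof -
  have "tuples d N = {xs. set xs \<subseteq> {..<d} \<and> length xs = N}" unfolding tuples_def by auto
  then show ?thesis using finite_lists_length_eq[of "{..<d}" N] by simp
qed

lemma bij_betw_append_tuples:
  assumes "m \<le> n"
  shows "bij_betw (\<lambda>(xs, zs). xs @ zs) (tuples d (n - m) \<times> tuples d m) (tuples d n)"
proof -
  have "inj_on (\<lambda>(xs, zs). xs @ zs) (tuples d (n - m) \<times> tuples d m)"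
    unfolding inj_on_def tuples_def by (clarsimp simp: append_eq_append_conv)
  moreover have "(\<lambda>(xs, zs). xs @ zs) ` (tuples d (n - m) \<times> tuples d m) = tuples d n"
  proof
    show "(\<lambda>(xs, zs). xs @ zs) ` (tuples d (n - m) \<times> tuples d m) \<subseteq> tuples d n"
      using assms by (auto simp: tuples_def)
    show "tuples d n \<subseteq> (\<lambda>(xs, zs). xs @ zs) ` (tuples d (n - m) \<times> tuples d m)"
    proof
      fix l assume l: "l \<in> tuples d n"
      have "take (n - m) l \<in> tuples d (n - m)" "drop (n - m) l \<in> tuples d m"
        using l assms by (auto simp: tuples_def dest: in_set_takeD in_set_dropD)
      then show "l \<in> (\<lambda>(xs, zs). xs @ zs) ` (tuples d (n - m) \<times> tuples d m)"
        by (intro image_eqI[of _ _ "(take (n - m) l, drop (n - m) l)"]) auto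
    qed
  qed
  ultimately show ?thesis unfolding bij_betw_def by blast
qed

lemma tnorm2_split_suffix:
  assumes "m \<le> n"
  shows "tnorm2 d n \<phi> = (\<Sum>zs\<in>tuples d m. tnorm2 d (n - m) (\<lambda>xs. \<phi> (xs @ zs)))"
proof -
  have "tnorm2 d n \<phi> = (\<Sum>(xs, zs)\<in>tuples d (n - m) \<times> tuples d m. (cmod (\<phi> (xs @ zs)))\<^sup>2)"
    unfolding tnorm2_def
    using sum.reindex_bij_betw[OF bij_betw_append_tuples[OF assms], of "\<lambda>l. (cmod (\<phi> l))\<^sup>2"]
    by (simp add: case_prod_unfold)
  also have "\<dots> = (\<Sum>zs\<in>tuples d m. \<Sum>xs\<in>tuples d (n - m). (cmod (\<phi> (xs @ zs)))\<^sup>2)"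
    by (simp add: sum.cartesian_product[symmetric] sum.swap[of _ "tuples d m"])
  finally show ?thesis unfolding tnorm2_def .
qed

lemma tnorm2_nonneg: "tnorm2 d N \<phi> \<ge> 0"
  unfolding tnorm2_def by (simp add: sum_nonneg)

lemma tnorm2_scale: "tnorm2 d N (\<lambda>xs. a * \<phi> xs) = (cmod a)\<^sup>2 * tnorm2 d N \<phi>"
  unfolding tnorm2_def by (simp add: norm_mult power_mult_distrib sum_distrib_left)

lemma tnorm2_eq_0_imp_zero:
  assumes "tvec d N u" "tnorm2 d N u = 0"
  shows "u xs = 0"
proof (cases "xs \<in> tuples d N")
  case True
  have "\<forall>x\<in>tuples d N. (cmod (u x))\<^sup>2 = 0"
    using assms(2) sum_nonneg_eq_0_iff[OF finite_tuples, where f="\<lambda>x. (cmod (u x))\<^sup>2"]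
    unfolding tnorm2_def by simp
  then show ?thesis using True by simp
next
  case False
  then show ?thesis using assms(1) unfolding tvec_def by simp
qed

section \<open>Product vectors spanning \<open>Vset\<close>\<close>

definition basis_vec :: "nat \<Rightarrow> nat \<Rightarrow> complex" where
  "basis_vec a x = (if x = a then 1 else 0)"

definition prod_vec :: "nat \<Rightarrow> (nat \<Rightarrow> nat \<Rightarrow> complex) \<Rightarrow> nat list \<Rightarrow> complex" where
  "prod_vec N f xs = (if length xs = N then \<Prod>i<N. f i (xs ! i) else 0)"

definition almost_power_factors ::
    "nat \<Rightarrow> nat \<Rightarrow> nat \<Rightarrow> (nat \<Rightarrow> complex) \<Rightarrow> (nat \<Rightarrow> nat \<Rightarrow> complex) \<Rightarrow> bool" where
  "almost_power_factors d N r \<theta> f \<longleftrightarrow>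
     (\<forall>i<N. f i = \<theta> \<or> (\<exists>a<d. f i = basis_vec a)) \<and> N - r \<le> card {i. i < N \<and> f i = \<theta>}"

lemma tvec_prod_vec:
  assumes "\<And>i x. i < N \<Longrightarrow> d \<le> x \<Longrightarrow> f i x = 0"
  shows "tvec d N (prod_vec N f)"
  unfolding tvec_def
proof (intro allI impI)
  fix l assume l: "l \<notin> tuples d N"
  show "prod_vec N f l = 0"
  proof (cases "length l = N")
    case True
    with l obtain j where "j < N" "d \<le> l ! j"
      unfolding tuples_def by (auto simp: subset_iff in_set_conv_nth not_less)
    then show ?thesis unfolding prod_vec_def using assms by (auto intro: prod_zero)
  qed (simp add: prod_vec_def)
qed

lemma prod_vec_append:
  assumes "length zs = m" "m \<le> N"
  shows "prod_vec N f (xs @ zs) = (\<Prod>j<m. f (N - m + j) (zs ! j)) * prod_vec (N - m) f xs"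
proof (cases "length xs = N - m")
  case True
  have "(\<Prod>i<N. f i ((xs @ zs) ! i))
      = (\<Prod>i\<in>{0..<N - m}. f i ((xs @ zs) ! i)) * (\<Prod>i\<in>{N - m..<N}. f i ((xs @ zs) ! i))"
    using assms by (simp add: lessThan_atLeast0 prod.atLeastLessThan_concat)
  also have "(\<Prod>i\<in>{0..<N - m}. f i ((xs @ zs) ! i)) = (\<Prod>i<N - m. f i (xs ! i))"
    using True by (simp add: lessThan_atLeast0 nth_append_left)
  also have "(\<Prod>i\<in>{N - m..<N}. f i ((xs @ zs) ! i)) = (\<Prod>j<m. f (N - m + j) (zs ! j))"
    using True assms
    by (simp add: prod.atLeastLessThan_shift_0[of _ "N - m" N] lessThan_atLeast0 nth_append_right)
  finally show ?thesis using True assms by (simp add: prod_vec_def)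
next
  case False
  then show ?thesis using assms by (simp add: prod_vec_def)
qed

lemma almost_power_factors_truncate:
  assumes "almost_power_factors d N r \<theta> f" "m \<le> N"
  shows "almost_power_factors d (N - m) r \<theta> f"
proof -
  have "{i. i < N \<and> f i = \<theta>} \<subseteq> {i. i < N - m \<and> f i = \<theta>} \<union> {N - m..<N}" by auto
  then have "card {i. i < N \<and> f i = \<theta>} \<le> card ({i. i < N - m \<and> f i = \<theta>} \<union> {N - m..<N})"
    by (intro card_mono) auto
  also have "\<dots> \<le> card {i. i < N - m \<and> f i = \<theta>} + card {N - m..<N}" by (rule card_Un_le)
  finally have "card {i. i < N \<and> f i = \<theta>} \<le> card {i. i < N - m \<and> f i = \<theta>} + m"
    using assms(2) by simp
  then show ?thesis using assms unfolding almost_power_factors_def by auto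
qed

lemma obtain_permutation_prefix_into:
  assumes "A \<subseteq> {..<N}" "k \<le> card A"
  obtains \<pi> where "\<pi> permutes {..<N}" "\<And>i. i < k \<Longrightarrow> \<pi> i \<in> A"
proof -
  obtain B where B: "B \<subseteq> A" "card B = k" by (rule obtain_subset_with_card_n[OF assms(2)])
  have finB: "finite B" using B(1) assms(1) by (meson finite_lessThan finite_subset)
  define ys where "ys = sorted_list_of_set B @ sorted_list_of_set ({..<N} - B)"
  have "distinct ys" unfolding ys_def using finB by auto
  moreover have "set ys = {..<N}" unfolding ys_def using finB B assms(1) by auto
  ultimately have "mset ys = mset [0..<N]"
    using set_eq_iff_mset_eq_distinct[of ys "[0..<N]"] by (simp add: lessThan_atLeast0)
  then obtain \<pi> where \<pi>: "\<pi> permutes {..<length [0..<N]}" "permute_list \<pi> [0..<N] = ys"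
    by (rule mset_eq_permutation)
  have \<pi>N: "\<pi> permutes {..<N}" using \<pi> by simp
  have "k \<le> N" using card_mono[OF _ assms(1)] assms(2) by simp
  have "\<pi> i \<in> A" if "i < k" for i
  proof -
    have iN: "i < N" using that \<open>k \<le> N\<close> by simp
    have "ys ! i = [0..<N] ! \<pi> i" using permute_list_nth[of \<pi> "[0..<N]" i] iN \<pi>N \<pi>(2) by simp
    then have "\<pi> i = ys ! i" using permutes_in_image[OF \<pi>N, of i] iN by simp
    also have "\<dots> = sorted_list_of_set B ! i" unfolding ys_def using that B finB
      by (simp add: nth_append_left)
    also have "\<dots> \<in> B" using that B finB
      by (metis length_sorted_list_of_set nth_mem set_sorted_list_of_set)
    finally show ?thesis using B by blast
  qed
  then show ?thesis using that \<pi>N by blast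
qed

lemma tpow_eq_prod_nth: "length xs = k \<Longrightarrow> tpow \<theta> k xs = (\<Prod>i<k. \<theta> (xs ! i))"
  unfolding tpow_def by (simp add: prod.list_conv_set_nth lessThan_atLeast0)

lemma tpow_take_mult_prod_drop_permute_list:
  assumes \<pi>: "\<pi> permutes {..<N}" and l: "length l = N" and r: "r \<le> N"
  shows "tpow \<theta> (N - r) (take (N - r) (permute_list \<pi> l))
           * (\<Prod>j<r. h j (drop (N - r) (permute_list \<pi> l) ! j))
       = (\<Prod>i<N. (if i < N - r then \<theta> else h (i - (N - r))) (l ! \<pi> i))"
proof -
  have nth: "permute_list \<pi> l ! i = l ! \<pi> i" if "i < N" for i
    using permute_list_nth[of \<pi> l] \<pi> that l by simp
  let ?g = "\<lambda>i. (if i < N - r then \<theta> else h (i - (N - r))) (l ! \<pi> i)"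
  have "(\<Prod>i<N. ?g i) = (\<Prod>i\<in>{0..<N - r}. ?g i) * (\<Prod>i\<in>{N - r..<N}. ?g i)"
    using prod.atLeastLessThan_concat[of 0 "N - r" N ?g] r by (simp add: lessThan_atLeast0)
  also have "(\<Prod>i\<in>{0..<N - r}. ?g i) = tpow \<theta> (N - r) (take (N - r) (permute_list \<pi> l))"
    using l r by (simp add: tpow_eq_prod_nth lessThan_atLeast0 nth)
  also have "(\<Prod>i\<in>{N - r..<N}. ?g i) = (\<Prod>j<r. h j (drop (N - r) (permute_list \<pi> l) ! j))"
    using l r by (simp add: prod.atLeastLessThan_shift_0[of _ "N - r" N] lessThan_atLeast0 nth)
  finally show ?thesis by simp
qed

lemma tperm_tprod_tpow_length:
  assumes "length l \<noteq> N" "tvec d r \<psi>" "r \<le> N"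
  shows "tperm \<pi> (tprod (N - r) (tpow \<theta> (N - r)) \<psi>) l = 0"
proof (cases "length l \<ge> N - r")
  case True
  then have "length (drop (N - r) (permute_list \<pi> l)) \<noteq> r" using assms by auto
  then have "\<psi> (drop (N - r) (permute_list \<pi> l)) = 0"
    using assms(2) unfolding tvec_def tuples_def by auto
  then show ?thesis unfolding tperm_def tprod_def by simp
next
  case False
  then show ?thesis unfolding tperm_def tprod_def tpow_def by auto
qed

lemma prod_vec_in_Vset:
  assumes \<theta>: "hvec d \<theta>" and r: "r \<le> N" and f: "almost_power_factors d N r \<theta> f"
  shows "prod_vec N f \<in> Vset d N r \<theta>"
proof -
  have "N - r \<le> card {i. i < N \<and> f i = \<theta>}" using f unfolding almost_power_factors_def by simp
  then obtain \<pi> where \<pi>: "\<pi> permutes {..<N}"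
    and \<pi>_\<theta>: "\<And>i. i < N - r \<Longrightarrow> \<pi> i \<in> {i. i < N \<and> f i = \<theta>}"
    by (rule obtain_permutation_prefix_into[rotated]) auto
  define \<psi> where "\<psi> = prod_vec r (\<lambda>j. f (\<pi> (N - r + j)))"
  have \<psi>: "tvec d r \<psi>"
    unfolding \<psi>_def
  proof (rule tvec_prod_vec)
    fix j x assume "j < r" "d \<le> x"
    moreover have "\<pi> (N - r + j) < N" using permutes_in_image[OF \<pi>] \<open>j < r\<close> r by simp
    ultimately show "f (\<pi> (N - r + j)) x = 0"
      using \<theta> f unfolding almost_power_factors_def hvec_def basis_vec_def by force
  qed
  have "prod_vec N f = tperm \<pi> (tprod (N - r) (tpow \<theta> (N - r)) \<psi>)"
  proof
    fix l
    show "prod_vec N f l = tperm \<pi> (tprod (N - r) (tpow \<theta> (N - r)) \<psi>) l"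
    proof (cases "length l = N")
      case True
      have "tperm \<pi> (tprod (N - r) (tpow \<theta> (N - r)) \<psi>) l
          = tpow \<theta> (N - r) (take (N - r) (permute_list \<pi> l))
              * (\<Prod>j<r. f (\<pi> (N - r + j)) (drop (N - r) (permute_list \<pi> l) ! j))"
        unfolding tperm_def tprod_def \<psi>_def prod_vec_def using True r by simp
      also have "\<dots> = (\<Prod>i<N. (if i < N - r then \<theta> else (\<lambda>j. f (\<pi> (N - r + j))) (i - (N - r))) (l ! \<pi> i))"
        by (rule tpow_take_mult_prod_drop_permute_list[OF \<pi> True r])
      also have "\<dots> = (\<Prod>i<N. f (\<pi> i) (l ! \<pi> i))"
        by (rule prod.cong) (use \<pi>_\<theta> r in auto)
      also have "\<dots> = (\<Prod>i<N. f i (l ! i))"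
        using prod.permute[OF \<pi>, of "\<lambda>i. f i (l ! i)"] by (simp add: comp_def)
      finally show ?thesis unfolding prod_vec_def using True by simp
    next
      case False
      then show ?thesis using tperm_tprod_tpow_length[OF False \<psi> r] unfolding prod_vec_def by simp
    qed
  qed
  then show ?thesis unfolding Vset_def using \<pi> \<psi> by blast
qed

lemma basis_expansion:
  assumes "tvec d r \<psi>" "length w = r"
  shows "\<psi> w = (\<Sum>ys\<in>tuples d r. \<psi> ys * (\<Prod>j<r. basis_vec (ys ! j) (w ! j)))"
proof -
  have "(\<Prod>j<r. basis_vec (ys ! j) (w ! j)) = (if ys = w then 1 else 0)" if "ys \<in> tuples d r" for ys
  proof (cases "ys = w")
    case False
    have "length ys = r" using that unfolding tuples_def by simp
    then obtain j where "j < r" "ys ! j \<noteq> w ! j" using False assms(2) by (metis nth_equalityI)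
    then show ?thesis using False by (auto simp: basis_vec_def intro!: prod_zero bexI[of _ j])
  qed (simp add: basis_vec_def)
  then have "(\<Sum>ys\<in>tuples d r. \<psi> ys * (\<Prod>j<r. basis_vec (ys ! j) (w ! j)))
           = (\<Sum>ys\<in>tuples d r. if w = ys then \<psi> ys else 0)"
    by (intro sum.cong) auto
  also have "\<dots> = \<psi> w"
    using assms(1) unfolding tvec_def
    by (cases "w \<in> tuples d r") (simp_all add: sum.delta'[OF finite_tuples])
  finally show ?thesis by simp
qed

definition power_basis_factors ::
    "nat \<Rightarrow> nat \<Rightarrow> (nat \<Rightarrow> complex) \<Rightarrow> nat list \<Rightarrow> nat \<Rightarrow> nat \<Rightarrow> complex" where
  "power_basis_factors N r \<theta> ys i = (if i < N - r then \<theta> else basis_vec (ys ! (i - (N - r))))"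

lemma almost_power_factors_power_basis:
  assumes \<pi>: "\<pi> permutes {..<N}" and r: "r \<le> N" and ys: "ys \<in> tuples d r"
  shows "almost_power_factors d N r \<theta> (\<lambda>i. power_basis_factors N r \<theta> ys (inv \<pi> i))"
proof -
  let ?f = "\<lambda>i. power_basis_factors N r \<theta> ys (inv \<pi> i)"
  have "?f i = \<theta> \<or> (\<exists>a<d. ?f i = basis_vec a)" if "i < N" for i
  proof (cases "inv \<pi> i < N - r")
    case False
    have "inv \<pi> i < N" using permutes_in_image[OF permutes_inv[OF \<pi>]] that by simp
    then have "inv \<pi> i - (N - r) < length ys" using False ys r unfolding tuples_def by auto
    then have "ys ! (inv \<pi> i - (N - r)) < d" using ys unfolding tuples_def by (auto dest: nth_mem)
    then show ?thesis using False unfolding power_basis_factors_def by auto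
  qed (simp add: power_basis_factors_def)
  moreover have "N - r \<le> card {i. i < N \<and> ?f i = \<theta>}"
  proof -
    have "\<pi> ` {..<N - r} \<subseteq> {i. i < N \<and> ?f i = \<theta>}"
      using permutes_inverses(2)[OF \<pi>] permutes_in_image[OF \<pi>]
      by (auto simp: power_basis_factors_def)
    then have "card (\<pi> ` {..<N - r}) \<le> card {i. i < N \<and> ?f i = \<theta>}"
      by (intro card_mono) auto
    moreover have "card (\<pi> ` {..<N - r}) = N - r"
      using card_image[OF inj_on_subset[OF permutes_inj[OF \<pi>]]] by simp
    ultimately show ?thesis by simp
  qed
  ultimately show ?thesis unfolding almost_power_factors_def by blast
qed

lemma tperm_tprod_tpow_expansion:
  assumes \<pi>: "\<pi> permutes {..<N}" and r: "r \<le> N" and \<psi>: "tvec d r \<psi>"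
  shows "tperm \<pi> (tprod (N - r) (tpow \<theta> (N - r)) \<psi>)
       = (\<lambda>l. \<Sum>ys\<in>tuples d r. \<psi> ys * prod_vec N (\<lambda>i. power_basis_factors N r \<theta> ys (inv \<pi> i)) l)"
proof
  fix l
  show "tperm \<pi> (tprod (N - r) (tpow \<theta> (N - r)) \<psi>) l
      = (\<Sum>ys\<in>tuples d r. \<psi> ys * prod_vec N (\<lambda>i. power_basis_factors N r \<theta> ys (inv \<pi> i)) l)"
  proof (cases "length l = N")
    case True
    define w where "w = drop (N - r) (permute_list \<pi> l)"
    have w: "length w = r" unfolding w_def using True r by simp
    have "tpow \<theta> (N - r) (take (N - r) (permute_list \<pi> l)) * (\<Prod>j<r. basis_vec (ys ! j) (w ! j))
        = prod_vec N (\<lambda>i. power_basis_factors N r \<theta> ys (inv \<pi> i)) l" for ys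
    proof -
      have "tpow \<theta> (N - r) (take (N - r) (permute_list \<pi> l)) * (\<Prod>j<r. basis_vec (ys ! j) (w ! j))
          = (\<Prod>i<N. power_basis_factors N r \<theta> ys i (l ! \<pi> i))"
        using tpow_take_mult_prod_drop_permute_list[OF \<pi> True r, of \<theta> "\<lambda>j. basis_vec (ys ! j)"]
        unfolding w_def by (simp add: power_basis_factors_def)
      also have "\<dots> = (\<Prod>i<N. power_basis_factors N r \<theta> ys (inv \<pi> i) (l ! i))"
        using prod.permute[OF permutes_inv[OF \<pi>], of "\<lambda>i. power_basis_factors N r \<theta> ys i (l ! \<pi> i)"]
        by (simp add: comp_def permutes_inverses(1)[OF \<pi>])
      finally show ?thesis unfolding prod_vec_def using True by simp
    qed
    then show ?thesis
      unfolding tperm_def tprod_def w_def[symmetric] basis_expansion[OF \<psi> w] sum_distrib_left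
      by (simp add: ac_simps)
  next
    case False
    then show ?thesis
      using tperm_tprod_tpow_length[OF False \<psi> r] unfolding prod_vec_def by simp
  qed
qed

lemma Vset_subset_cspan_prod_vec:
  assumes r: "r \<le> N" and v: "v \<in> Vset d N r \<theta>"
  shows "v \<in> cspan {prod_vec N f | f. almost_power_factors d N r \<theta> f}"
proof -
  obtain \<pi> \<psi> where v_def: "v = tperm \<pi> (tprod (N - r) (tpow \<theta> (N - r)) \<psi>)"
    and \<pi>: "\<pi> permutes {..<N}" and \<psi>: "tvec d r \<psi>"
    using v unfolding Vset_def by blast
  have "prod_vec N (\<lambda>i. power_basis_factors N r \<theta> ys (inv \<pi> i))
      \<in> {prod_vec N f | f. almost_power_factors d N r \<theta> f}" if "ys \<in> tuples d r" for ys
    using almost_power_factors_power_basis[OF \<pi> r that] by blast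
  then show ?thesis
    unfolding v_def tperm_tprod_tpow_expansion[OF \<pi> r \<psi>]
    by (intro cspan_sum finite_tuples cspan_superset)
qed

lemma cspan_Vset_fix_suffix:
  assumes \<theta>: "hvec d \<theta>" and rm: "r + m \<le> N" and zs: "length zs = m"
    and v: "v \<in> cspan (Vset d N r \<theta>)"
  shows "(\<lambda>xs. v (xs @ zs)) \<in> cspan (Vset d (N - m) r \<theta>)"
proof -
  have "(\<lambda>xs. prod_vec N f (xs @ zs)) \<in> cspan (Vset d (N - m) r \<theta>)"
    if "almost_power_factors d N r \<theta> f" for f
  proof -
    have "prod_vec (N - m) f \<in> Vset d (N - m) r \<theta>"
      using prod_vec_in_Vset[OF \<theta>] almost_power_factors_truncate[OF that] rm by simp
    then have "(\<lambda>xs. (\<Prod>j<m. f (N - m + j) (zs ! j)) * prod_vec (N - m) f xs)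
        \<in> cspan (Vset d (N - m) r \<theta>)"
      by (intro cspan_scale cspan_superset)
    then show ?thesis using prod_vec_append[OF zs, of N f] rm by simp
  qed
  then have "(\<lambda>xs. u (xs @ zs)) \<in> cspan (Vset d (N - m) r \<theta>)" if "u \<in> Vset d N r \<theta>" for u
    using cspan_reindex[OF _ Vset_subset_cspan_prod_vec[OF _ that]] rm by fastforce
  then show ?thesis by (rule cspan_reindex[OF _ v])
qed

section \<open>Symmetry and the partial trace\<close>

lemma bij_betw_rank:
  fixes S :: "nat set"
  assumes "finite S"
  shows "bij_betw (\<lambda>i. card {j\<in>S. j < i}) S {..<card S}"
proof -
  let ?rank = "\<lambda>i. card {j\<in>S. j < i}"
  have less: "?rank i < ?rank i'" if "i \<in> S" "i < i'" for i i'
  proof (rule psubset_card_mono)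
    show "finite {j\<in>S. j < i'}" using assms by simp
    show "{j\<in>S. j < i} \<subset> {j\<in>S. j < i'}" using that by auto
  qed
  have inj: "inj_on ?rank S"
  proof (rule inj_onI)
    fix i i' assume "i \<in> S" "i' \<in> S" "?rank i = ?rank i'"
    then show "i = i'" using less[of i i'] less[of i' i] by (cases i i' rule: linorder_cases) auto
  qed
  have "?rank i < card S" if "i \<in> S" for i
    by (rule psubset_card_mono[OF assms]) (use that in auto)
  then have "?rank ` S \<subseteq> {..<card S}" by auto
  moreover have "card (?rank ` S) = card {..<card S}" using card_image[OF inj] by simp
  ultimately have "?rank ` S = {..<card S}" using card_subset_eq by blast
  then show ?thesis using inj unfolding bij_betw_def by simp
qed

lemma image_mset_nth_rank:
  fixes S :: "nat set"
  assumes "finite S" "length ys = card S"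
  shows "image_mset (\<lambda>i. ys ! card {j\<in>S. j < i}) (mset_set S) = mset ys"
proof -
  let ?rank = "\<lambda>i. card {j\<in>S. j < i}"
  have "image_mset (\<lambda>i. ys ! ?rank i) (mset_set S) = image_mset (nth ys) (image_mset ?rank (mset_set S))"
    by (simp add: multiset.map_comp comp_def)
  also have "image_mset ?rank (mset_set S) = mset_set {..<card S}"
    using bij_betw_rank[OF assms(1)] unfolding bij_betw_def by (simp add: image_mset_mset_set)
  also have "image_mset (nth ys) (mset_set {..<card S}) = mset (map (nth ys) [0..<card S])"
    by (simp add: mset_upt lessThan_atLeast0)
  also have "map (nth ys) [0..<card S] = ys" using assms(2) by (metis map_nth)
  finally show ?thesis .
qed

lemma mset_merge:
  assumes T: "T \<subseteq> {..<n}" "card T = m" and xs: "length xs = n - m" and zs: "length zs = m"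
  shows "mset (merge n T xs zs) = mset xs + mset zs"
proof -
  define h where
    "h i = (if i \<in> T then zs ! card {j\<in>T. j < i} else xs ! card {j\<in>{..<n} - T. j < i})" for i
  have finT: "finite T" using T finite_subset by blast
  have "mset (merge n T xs zs) = image_mset h (mset_set {..<n})"
    unfolding merge_def h_def by (simp add: mset_upt lessThan_atLeast0)
  also have "mset_set {..<n} = mset_set T + mset_set ({..<n} - T)"
    using mset_set_Union[of T "{..<n} - T"] finT T by (simp add: Un_absorb1)
  also have "image_mset h (mset_set T + mset_set ({..<n} - T))
      = image_mset h (mset_set T) + image_mset h (mset_set ({..<n} - T))" by simp
  also have "image_mset h (mset_set T) = image_mset (\<lambda>i. zs ! card {j\<in>T. j < i}) (mset_set T)"
    by (rule image_mset_cong) (use finT in \<open>simp add: h_def\<close>)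
  also have "image_mset h (mset_set ({..<n} - T))
      = image_mset (\<lambda>i. xs ! card {j\<in>{..<n} - T. j < i}) (mset_set ({..<n} - T))"
    by (rule image_mset_cong) (simp add: h_def)
  finally show ?thesis
    using image_mset_nth_rank[of T zs] image_mset_nth_rank[of "{..<n} - T" xs] finT T xs zs
    by (simp add: card_Diff_subset add.commute)
qed

lemma sym_space_merge:
  assumes \<phi>: "\<phi> \<in> sym_space d n" and T: "T \<subseteq> {..<n}" "card T = m"
    and xs: "length xs = n - m" and zs: "length zs = m"
  shows "\<phi> (merge n T xs zs) = \<phi> (xs @ zs)"
proof -
  have "m \<le> n" using card_mono[OF _ T(1)] T(2) by simp
  obtain \<pi> where \<pi>: "\<pi> permutes {..<length (xs @ zs)}" "permute_list \<pi> (xs @ zs) = merge n T xs zs"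
    using mset_eq_permutation[of "merge n T xs zs" "xs @ zs"] mset_merge[OF T xs zs] by auto
  have "\<pi> permutes {..<n}" using \<pi>(1) xs zs \<open>m \<le> n\<close> by simp
  then have "tperm \<pi> \<phi> = \<phi>" using \<phi> unfolding sym_space_def by blast
  then show ?thesis using \<pi>(2) unfolding tperm_def by metis
qed

lemma permute_list_append:
  assumes "\<sigma> permutes {..<length xs}"
  shows "permute_list \<sigma> (xs @ zs) = permute_list \<sigma> xs @ zs"
proof (rule nth_equalityI)
  fix i assume "i < length (permute_list \<sigma> (xs @ zs))"
  then have i: "i < length xs + length zs" by simp
  show "permute_list \<sigma> (xs @ zs) ! i = (permute_list \<sigma> xs @ zs) ! i"
  proof (cases "i < length xs")
    case True
    have "\<sigma> i < length xs" using permutes_in_image[OF assms] True by simp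
    then show ?thesis using True i assms by (simp add: permute_list_def nth_append_left)
  next
    case False
    have "\<sigma> i = i" using permutes_not_in[OF assms] False by simp
    then show ?thesis using False i by (simp add: permute_list_def nth_append)
  qed
qed simp

lemma tvec_fix_suffix:
  assumes "tvec d n \<phi>" "length zs = m" "m \<le> n"
  shows "tvec d (n - m) (\<lambda>xs. \<phi> (xs @ zs))"
  using assms unfolding tvec_def tuples_def by auto

lemma sym_space_fix_suffix:
  assumes \<phi>: "\<phi> \<in> sym_space d n" and zs: "length zs = m" and "m \<le> n"
  shows "(\<lambda>xs. \<phi> (xs @ zs)) \<in> sym_space d (n - m)"
proof -
  have tvec: "tvec d n \<phi>" using \<phi> unfolding sym_space_def by blast
  have "\<phi> (permute_list \<sigma> xs @ zs) = \<phi> (xs @ zs)" if \<sigma>: "\<sigma> permutes {..<n - m}" for \<sigma> xs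
  proof (cases "length xs = n - m")
    case True
    have "\<sigma> permutes {..<n}" by (rule permutes_subset[OF \<sigma>]) auto
    then have "tperm \<sigma> \<phi> = \<phi>" using \<phi> unfolding sym_space_def by blast
    then have "\<phi> (permute_list \<sigma> (xs @ zs)) = \<phi> (xs @ zs)" unfolding tperm_def by (rule fun_cong)
    then show ?thesis using permute_list_append[of \<sigma> xs zs] \<sigma> True by simp
  next
    case False
    then have "length (permute_list \<sigma> xs @ zs) \<noteq> n" "length (xs @ zs) \<noteq> n"
      using zs \<open>m \<le> n\<close> by auto
    then show ?thesis using tvec unfolding tvec_def tuples_def by auto
  qed
  then show ?thesis
    using tvec_fix_suffix[OF tvec zs \<open>m \<le> n\<close>] unfolding sym_space_def tperm_def by auto
qed

lemma almost_power_fix_suffix: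
  assumes \<theta>: "hvec d \<theta>" and \<phi>: "\<phi> \<in> almost_power d n r \<theta>"
    and rm: "r + m \<le> n" and zs: "length zs = m"
  shows "(\<lambda>xs. \<phi> (xs @ zs)) \<in> almost_power d (n - m) r \<theta>"
  using sym_space_fix_suffix[OF _ zs] cspan_Vset_fix_suffix[OF \<theta> rm zs] \<phi> rm
  unfolding almost_power_def by simp

lemma ptrace_mixture_sym_space:
  assumes F: "finite F" "F \<subseteq> sym_space d n" and T: "T \<subseteq> {..<n}" "card T = m"
  shows "ptrace d n T (\<lambda>xs ys. \<Sum>\<phi>\<in>F. complex_of_real (p \<phi>) * proj \<phi> xs ys)
       = (\<lambda>xs ys. \<Sum>\<phi>\<in>F. \<Sum>zs\<in>tuples d m.
            complex_of_real (p \<phi>) * proj (\<lambda>xs. \<phi> (xs @ zs)) xs ys)"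
proof (intro ext)
  fix xs ys
  have "m \<le> n" using card_mono[OF _ T(1)] T(2) by simp
  show "ptrace d n T (\<lambda>xs ys. \<Sum>\<phi>\<in>F. complex_of_real (p \<phi>) * proj \<phi> xs ys) xs ys
      = (\<Sum>\<phi>\<in>F. \<Sum>zs\<in>tuples d m. complex_of_real (p \<phi>) * proj (\<lambda>xs. \<phi> (xs @ zs)) xs ys)"
  proof (cases "xs \<in> tuples d (n - m) \<and> ys \<in> tuples d (n - m)")
    case True
    then have xs: "length xs = n - m" and ys: "length ys = n - m" unfolding tuples_def by auto
    have "proj \<phi> (merge n T xs zs) (merge n T ys zs) = proj \<phi> (xs @ zs) (ys @ zs)"
      if "\<phi> \<in> F" "zs \<in> tuples d m" for \<phi> zs
    proof -
      have \<phi>: "\<phi> \<in> sym_space d n" and zs: "length zs = m"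
        using that F(2) unfolding tuples_def by auto
      show ?thesis
        unfolding proj_def sym_space_merge[OF \<phi> T xs zs] sym_space_merge[OF \<phi> T ys zs] ..
    qed
    then have "ptrace d n T (\<lambda>xs ys. \<Sum>\<phi>\<in>F. complex_of_real (p \<phi>) * proj \<phi> xs ys) xs ys
        = (\<Sum>zs\<in>tuples d m. \<Sum>\<phi>\<in>F. complex_of_real (p \<phi>) * proj \<phi> (xs @ zs) (ys @ zs))"
      unfolding ptrace_def using True T(2) by simp
    also have "\<dots> = (\<Sum>\<phi>\<in>F. \<Sum>zs\<in>tuples d m. complex_of_real (p \<phi>) * proj \<phi> (xs @ zs) (ys @ zs))"
      by (rule sum.swap)
    finally show ?thesis by (simp add: proj_def)
  next
    case False
    have "proj (\<lambda>xs. \<phi> (xs @ zs)) xs ys = 0" if "\<phi> \<in> F" "zs \<in> tuples d m" for \<phi> zs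
    proof -
      have "tvec d n \<phi>" "length zs = m"
        using that F(2) unfolding sym_space_def tuples_def by auto
      then have "tvec d (n - m) (\<lambda>xs. \<phi> (xs @ zs))"
        using tvec_fix_suffix \<open>m \<le> n\<close> by blast
      then show ?thesis using False unfolding tvec_def proj_def by auto
    qed
    moreover have "ptrace d n T (\<lambda>xs ys. \<Sum>\<phi>\<in>F. complex_of_real (p \<phi>) * proj \<phi> xs ys) xs ys = 0"
      unfolding ptrace_def T(2) by (rule if_not_P[OF False])
    ultimately show ?thesis by (simp add: sum.neutral)
  qed
qed

section \<open>Mixtures\<close>

lemma almost_power_scale:
  assumes "\<phi> \<in> almost_power d N r \<theta>"
  shows "(\<lambda>xs. a * \<phi> xs) \<in> almost_power d N r \<theta>"
  using assms cspan_scale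
  unfolding almost_power_def sym_space_def tvec_def tperm_def by (auto simp: fun_eq_iff)

lemma convex_combination_in_conv_almost_power:
  assumes I: "finite I" and w: "\<And>i. i \<in> I \<Longrightarrow> w i \<ge> 0"
    and v: "\<And>i. i \<in> I \<Longrightarrow> v i \<in> almost_power_states d N r \<theta>" and total: "sum w I = 1"
  shows "(\<lambda>xs ys. \<Sum>i\<in>I. complex_of_real (w i) * proj (v i) xs ys) \<in> conv_almost_power d N r \<theta>"
proof -
  define p where "p \<psi> = (\<Sum>i\<in>{i\<in>I. v i = \<psi>}. w i)" for \<psi>
  have "(\<Sum>i\<in>I. complex_of_real (w i) * proj (v i) xs ys)
      = (\<Sum>\<psi>\<in>v ` I. complex_of_real (p \<psi>) * proj \<psi> xs ys)" for xs ys
  proof -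
    have "(\<Sum>i\<in>I. complex_of_real (w i) * proj (v i) xs ys)
        = (\<Sum>\<psi>\<in>v ` I. \<Sum>i\<in>{i\<in>I. v i = \<psi>}. complex_of_real (w i) * proj (v i) xs ys)"
      by (rule sum.image_gen[OF I])
    also have "\<dots> = (\<Sum>\<psi>\<in>v ` I. \<Sum>i\<in>{i\<in>I. v i = \<psi>}. complex_of_real (w i) * proj \<psi> xs ys)"
      by (intro sum.cong) auto
    finally show ?thesis unfolding p_def by (simp add: sum_distrib_right)
  qed
  moreover have "sum p (v ` I) = 1"
    unfolding p_def using sum.image_gen[OF I, of w v] total by simp
  moreover have "p \<psi> \<ge> 0" for \<psi>
    unfolding p_def using w by (intro sum_nonneg) auto
  ultimately show ?thesis
    unfolding conv_almost_power_def
    by (intro CollectI exI[of _ "v ` I"] exI[of _ p] conjI) (use I v in auto)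
qed

lemma mixture_in_conv_almost_power:
  assumes I: "finite I" and w: "\<And>i. i \<in> I \<Longrightarrow> w i \<ge> 0"
    and u: "\<And>i. i \<in> I \<Longrightarrow> u i \<in> almost_power d N r \<theta>"
    and total: "(\<Sum>i\<in>I. w i * tnorm2 d N (u i)) = 1"
  shows "(\<lambda>xs ys. \<Sum>i\<in>I. complex_of_real (w i) * proj (u i) xs ys) \<in> conv_almost_power d N r \<theta>"
proof -
  define t where "t i = tnorm2 d N (u i)" for i
  define I' where "I' = {i\<in>I. t i \<noteq> 0}"
  define v where "v i = (\<lambda>xs. complex_of_real (1 / sqrt (t i)) * u i xs)" for i
  have t_pos: "t i > 0" if "i \<in> I'" for i
    using that tnorm2_nonneg[of d N "u i"] unfolding I'_def t_def by auto
  have v: "v i \<in> almost_power_states d N r \<theta>" if "i \<in> I'" for i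
  proof -
    have "v i \<in> almost_power d N r \<theta>"
      unfolding v_def using u that almost_power_scale unfolding I'_def by blast
    moreover have "tnorm2 d N (v i) = 1"
      unfolding v_def tnorm2_scale using t_pos[OF that]
      by (simp add: t_def[symmetric] power_divide norm_divide)
    ultimately show ?thesis unfolding almost_power_states_def by blast
  qed
  have proj_v: "proj (u i) xs ys = complex_of_real (t i) * proj (v i) xs ys" if "i \<in> I'" for i xs ys
  proof -
    have "complex_of_real (t i) * (complex_of_real (1 / sqrt (t i)) * complex_of_real (1 / sqrt (t i))) = 1"
      using t_pos[OF that] by (simp flip: of_real_mult)
    then show ?thesis unfolding proj_def v_def by (simp add: ac_simps)
  qed
  have proj_0: "proj (u i) xs ys = 0" if "i \<in> I" "i \<notin> I'" for i xs ys
  proof -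
    have "tvec d N (u i)" using u that unfolding almost_power_def sym_space_def by blast
    then have "u i xs = 0" using tnorm2_eq_0_imp_zero that unfolding I'_def t_def by auto
    then show ?thesis unfolding proj_def by simp
  qed
  have "(\<Sum>i\<in>I. complex_of_real (w i) * proj (u i) xs ys)
      = (\<Sum>i\<in>I'. complex_of_real (w i * t i) * proj (v i) xs ys)" for xs ys
    using sum.mono_neutral_right[of I I' "\<lambda>i. complex_of_real (w i) * proj (u i) xs ys"]
      I proj_0 proj_v by (auto simp: I'_def mult.assoc)
  moreover have "(\<lambda>xs ys. \<Sum>i\<in>I'. complex_of_real (w i * t i) * proj (v i) xs ys)
      \<in> conv_almost_power d N r \<theta>"
  proof (rule convex_combination_in_conv_almost_power)
    have "(\<Sum>i\<in>I'. w i * t i) = (\<Sum>i\<in>I. w i * t i)"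
      by (rule sum.mono_neutral_left) (use I in \<open>auto simp: I'_def\<close>)
    then show "(\<Sum>i\<in>I'. w i * t i) = 1" using total unfolding t_def by simp
  qed (use I w t_pos v in \<open>auto simp: I'_def less_imp_le\<close>)
  ultimately show ?thesis by simp
qed

theorem lemma1:
  fixes d n m r :: nat and \<theta> :: "nat \<Rightarrow> complex"
    and \<rho> :: "nat list \<Rightarrow> nat list \<Rightarrow> complex" and T :: "nat set"
  assumes "hvec d \<theta>" and "hnorm2 d \<theta> = 1"
    and "r + m \<le> n"
    and "\<rho> \<in> conv_almost_power d n r \<theta>"
    and "T \<subseteq> {..<n}" and "card T = m"
  shows "ptrace d n T \<rho> \<in> conv_almost_power d (n - m) r \<theta>"
proof -
  obtain F p where F: "finite F" "F \<subseteq> almost_power_states d n r \<theta>" "\<forall>\<phi>\<in>F. p \<phi> \<ge> 0"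
    and "sum p F = 1" and \<rho>: "\<rho> = (\<lambda>xs ys. \<Sum>\<phi>\<in>F. complex_of_real (p \<phi>) * proj \<phi> xs ys)"
    using assms(4) unfolding conv_almost_power_def by blast
  have F_sym: "F \<subseteq> sym_space d n" and F_ap: "F \<subseteq> almost_power d n r \<theta>"
    using F(2) unfolding almost_power_states_def almost_power_def by auto
  let ?u = "\<lambda>(\<phi>, zs) xs. \<phi> (xs @ zs)"
  have "ptrace d n T \<rho>
      = (\<lambda>xs ys. \<Sum>i\<in>F \<times> tuples d m. complex_of_real (p (fst i)) * proj (?u i) xs ys)"
    unfolding \<rho> ptrace_mixture_sym_space[OF F(1) F_sym assms(5,6)]
    by (simp add: sum.cartesian_product split_def)
  also have "\<dots> \<in> conv_almost_power d (n - m) r \<theta>"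
  proof (rule mixture_in_conv_almost_power)
    show "?u i \<in> almost_power d (n - m) r \<theta>" if "i \<in> F \<times> tuples d m" for i
      using that F_ap almost_power_fix_suffix[OF assms(1) _ assms(3)] by (auto simp: tuples_def)
    have "(\<Sum>i\<in>F \<times> tuples d m. p (fst i) * tnorm2 d (n - m) (?u i))
        = (\<Sum>\<phi>\<in>F. \<Sum>zs\<in>tuples d m. p \<phi> * tnorm2 d (n - m) (\<lambda>xs. \<phi> (xs @ zs)))"
      by (simp add: sum.cartesian_product split_def)
    also have "\<dots> = (\<Sum>\<phi>\<in>F. p \<phi> * tnorm2 d n \<phi>)"
      using assms(3) by (simp add: tnorm2_split_suffix[of m n] sum_distrib_left)
    also have "\<dots> = 1"
      using F(2) \<open>sum p F = 1\<close> unfolding almost_power_states_def by (simp add: subset_iff)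
    finally show "(\<Sum>i\<in>F \<times> tuples d m. p (fst i) * tnorm2 d (n - m) (?u i)) = 1" .
  qed (use F(1,3) finite_tuples in auto)
  finally show ?thesis .
qed

end
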